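(* Consider the all-to-all Kuramoto model $\dot\theta_i=\omega_i+\frac KN\sum_{j=1}^N\sin(\theta_j-\theta_i)$, $i=1,\dots,N$, with $\omega_{\max}=\max_i\omega_i$, $\omega_{\min}=\min_i\omega_i$. Let $\epsilon\in(0,\pi/4)$ and $\mathcal D=\{\theta\in\mathbb R^N: |\theta_i-\theta_j|\le\frac\pi2-2\epsilon\ \forall i,j\}$. If $\theta(0)\in\mathcal D$ and $K>\frac{N(\omega_{\max}-\omega_{\min})}{2\cos(2\epsilon)}$, then the oscillators asymptotically frequency synchronize: $\dot\theta_i(t)-\dot\theta_j(t)\to0$ as $t\to\infty$ for all $i,j=1,\dots,N$. *)

theory Defs
  imports "HOL-Analysis.Analysis"
begin

end

theory Submission
  imports Defs
begin

text \<open>For \<open>0 < \<gamma> < pi\<close> the cohesive set \<open>{\<theta>. \<forall>i j. \<theta> i - \<theta> j \<le> \<gamma>}\<close> is forward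
  invariant: on its boundary \<open>\<theta> i - \<theta> j = \<gamma>\<close> every oscillator pulls the leading phase \<open>\<theta> i\<close>
  and the trailing phase \<open>\<theta> j\<close> together, the two mutual terms alone at rate \<open>2 K sin \<gamma> / N\<close>,
  which exceeds the spread of the natural frequencies. Along solutions the potential
  \<open>V = - (\<Sum>i. (\<omega> i - w) * \<theta> i) - K / (2 N) * (\<Sum>i j. cos (\<theta> j - \<theta> i))\<close>, with \<open>w\<close> the
  mean natural frequency, satisfies \<open>V' = - (\<Sum>i. (\<theta>' i - w)\<^sup>2)\<close>; it is bounded below on the
  cohesive set because \<open>\<Sum>i. \<omega> i - w = 0\<close> lets its linear part be written in the bounded
  differences \<open>\<theta> i - \<theta> 0\<close>. The frequencies \<open>\<theta>' i\<close> are Lipschitz in time, so Barbalat's lemma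
  gives \<open>\<theta>' i \<longrightarrow> w\<close> for every \<open>i\<close>. The theorem is the case \<open>\<gamma> = pi / 2 - 2 \<epsilon>\<close>, where
  \<open>sin \<gamma> = cos (2 \<epsilon>)\<close>.\<close>

lemma sum_sum_antisym_eq_0:
  fixes a :: "'i \<Rightarrow> 'i \<Rightarrow> 'a::linordered_ab_group_add"
  assumes "\<And>i j. i \<in> A \<Longrightarrow> j \<in> A \<Longrightarrow> a j i = - a i j"
  shows "(\<Sum>i\<in>A. \<Sum>j\<in>A. a i j) = 0"
proof -
  have "(\<Sum>i\<in>A. \<Sum>j\<in>A. a i j) = (\<Sum>j\<in>A. \<Sum>i\<in>A. a i j)" by (rule sum.swap)
  also have "\<dots> = (\<Sum>j\<in>A. \<Sum>i\<in>A. - a j i)"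
    by (intro sum.cong refl) (metis assms)
  finally show ?thesis by (simp add: sum_negf)
qed

lemma sum_sum_antisym_mult_diff:
  fixes a :: "'i \<Rightarrow> 'i \<Rightarrow> 'a::comm_ring_1"
  assumes "\<And>i j. i \<in> A \<Longrightarrow> j \<in> A \<Longrightarrow> a j i = - a i j"
  shows "(\<Sum>i\<in>A. \<Sum>j\<in>A. a i j * (x j - x i)) = - 2 * (\<Sum>i\<in>A. x i * (\<Sum>j\<in>A. a i j))"
proof -
  have "(\<Sum>i\<in>A. \<Sum>j\<in>A. a i j * x j) = (\<Sum>j\<in>A. \<Sum>i\<in>A. a i j * x j)" by (rule sum.swap)
  also have "\<dots> = (\<Sum>j\<in>A. \<Sum>i\<in>A. - (a j i * x j))"
    by (intro sum.cong refl) (metis assms minus_mult_left)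
  finally have swap: "(\<Sum>i\<in>A. \<Sum>j\<in>A. a i j * x j) = - (\<Sum>i\<in>A. \<Sum>j\<in>A. a i j * x i)"
    by (simp add: sum_negf)
  have "(\<Sum>i\<in>A. \<Sum>j\<in>A. a i j * (x j - x i))
      = (\<Sum>i\<in>A. \<Sum>j\<in>A. a i j * x j) - (\<Sum>i\<in>A. \<Sum>j\<in>A. a i j * x i)"
    by (simp add: right_diff_distrib sum_subtractf)
  also have "\<dots> = - 2 * (\<Sum>i\<in>A. \<Sum>j\<in>A. a i j * x i)"
    unfolding swap by simp
  also have "(\<Sum>i\<in>A. \<Sum>j\<in>A. a i j * x i) = (\<Sum>i\<in>A. x i * (\<Sum>j\<in>A. a i j))"
    by (simp add: sum_distrib_left mult.commute)
  finally show ?thesis .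
qed

lemma sum_power2_diff_eq:
  fixes x :: "'i \<Rightarrow> 'a::comm_ring_1"
  assumes "(\<Sum>i\<in>A. x i - m) = 0"
  shows "(\<Sum>i\<in>A. (x i - m)\<^sup>2) = (\<Sum>i\<in>A. x i * (x i - m))"
proof -
  have "(\<Sum>i\<in>A. (x i - m)\<^sup>2) = (\<Sum>i\<in>A. x i * (x i - m) - m * (x i - m))"
    by (simp add: power2_eq_square algebra_simps)
  also have "\<dots> = (\<Sum>i\<in>A. x i * (x i - m)) - m * (\<Sum>i\<in>A. x i - m)"
    unfolding sum_distrib_left by (rule sum_subtractf)
  finally show ?thesis by (simp only: assms mult_zero_right diff_zero)
qed

lemma lipschitz_on_sum:
  fixes f :: "'i \<Rightarrow> 'a::metric_space \<Rightarrow> 'b::real_normed_vector"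
  assumes "\<And>k. k \<in> I \<Longrightarrow> (C k)-lipschitz_on U (f k)"
  shows "(\<Sum>k\<in>I. C k)-lipschitz_on U (\<lambda>x. \<Sum>k\<in>I. f k x)"
  using assms
proof (induction I rule: infinite_finite_induct)
  case (insert k I)
  then show ?case by (simp add: lipschitz_on_add)
qed (simp_all add: lipschitz_on_constant)

lemma lipschitz_on_sin: "1-lipschitz_on S (sin :: real \<Rightarrow> real)"
proof (rule lipschitz_onI)
  fix x y :: real
  have "\<bar>sin x - sin y\<bar> = 2 * \<bar>sin ((x - y) / 2)\<bar> * \<bar>cos ((x + y) / 2)\<bar>"
    by (simp add: sin_diff_sin abs_mult)
  also have "\<dots> \<le> 2 * \<bar>(x - y) / 2\<bar> * 1"
    by (intro mult_mono abs_sin_x_le_abs_x abs_cos_le_one) auto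
  finally show "dist (sin x) (sin y) \<le> 1 * dist x y" by (simp add: dist_real_def)
qed simp

lemma eventually_at_right_less_of_deriv_neg:
  fixes f :: "real \<Rightarrow> real"
  assumes "(f has_real_derivative d) (at s within {s..})" "d < 0"
  shows "eventually (\<lambda>x. f x < f s) (at_right s)"
proof -
  obtain \<delta> where \<delta>: "\<delta> > 0" "\<And>h. 0 < h \<Longrightarrow> h < \<delta> \<Longrightarrow> f (s + h) < f s"
    using has_real_derivative_neg_dec_right[OF assms] by auto
  show ?thesis unfolding eventually_at_right_field
  proof (intro exI[of _ "s + \<delta>"] conjI allI impI)
    fix y assume "s < y" "y < s + \<delta>"
    then show "f y < f s" using \<delta>(2)[of "y - s"] by simp
  qed (use \<delta> in simp)
qed

lemma eventually_at_right_le_of_boundary_deriv_neg: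
  fixes f :: "real \<Rightarrow> real"
  assumes cont: "continuous_on {0..} f" and "0 \<le> s" "f s \<le> c"
    and boundary: "f s = c \<Longrightarrow> \<exists>d<0. (f has_real_derivative d) (at s within {0..})"
  shows "eventually (\<lambda>x. f x \<le> c) (at_right s)"
proof (cases "f s < c")
  case True
  have "continuous (at s within {0..}) f"
    using cont \<open>0 \<le> s\<close> by (simp add: continuous_on_eq_continuous_within)
  then have "eventually (\<lambda>x. f x < c) (at s within {0..})"
    using True by (simp add: continuous_within order_tendstoD)
  moreover have "at_right s \<le> at s within {0..}" using \<open>0 \<le> s\<close> by (intro at_le) auto
  ultimately have "eventually (\<lambda>x. f x < c) (at_right s)"
    by (rule filter_leD[rotated])
  then show ?thesis by (rule eventually_mono) simp
next
  case False
  with \<open>f s \<le> c\<close> have "f s = c" by simp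
  with boundary obtain d where "d < 0" "(f has_real_derivative d) (at s within {0..})"
    by blast
  then have "(f has_real_derivative d) (at s within {s..})"
    using \<open>0 \<le> s\<close> by (auto intro: has_field_derivative_subset)
  from eventually_at_right_less_of_deriv_neg[OF this \<open>d < 0\<close>] show ?thesis
    by (rule eventually_mono) (use \<open>f s = c\<close> in simp)
qed

lemma sublevel_forward_invariant:
  fixes f :: "'i \<Rightarrow> real \<Rightarrow> real"
  assumes "finite I"
    and cont: "\<And>k. k \<in> I \<Longrightarrow> continuous_on {0..} (f k)"
    and init: "\<And>k. k \<in> I \<Longrightarrow> f k 0 \<le> c"
    and exit: "\<And>k s. k \<in> I \<Longrightarrow> 0 \<le> s \<Longrightarrow> \<forall>l\<in>I. f l s \<le> c \<Longrightarrow> f k s = c \<Longrightarrow>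
                 \<exists>d<0. (f k has_real_derivative d) (at s within {0..})"
    and "0 \<le> t"
  shows "\<forall>k\<in>I. f k t \<le> c"
proof (rule ccontr)
  assume violated: "\<not> ?thesis"
  define S where "S = {s \<in> {0..t}. \<forall>k\<in>I. f k s \<le> c}"
  have "S = {0..t} \<inter> (\<Inter>k\<in>I. {s \<in> {0..t}. f k s \<le> c})" by (auto simp: S_def)
  moreover have "closed {s \<in> {0..t}. f k s \<le> c}" if "k \<in> I" for k
    using cont[OF that]
    by (intro continuous_on_closed_Collect_le continuous_on_const)
      (auto intro: continuous_on_subset)
  ultimately have "closed S" by auto
  moreover have "0 \<in> S" using init \<open>0 \<le> t\<close> by (auto simp: S_def)
  moreover have "bdd_above S" by (auto simp: S_def intro: bdd_aboveI[of _ t])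
  ultimately have "Sup S \<in> S" by (intro closed_contains_Sup) auto
  then obtain s where s: "s = Sup S" "0 \<le> s" "s \<le> t" "\<forall>k\<in>I. f k s \<le> c"
    by (auto simp: S_def)
  with violated have "s < t" by force
  have "eventually (\<lambda>x. f k x \<le> c) (at_right s)" if "k \<in> I" for k
    using s that cont exit by (intro eventually_at_right_le_of_boundary_deriv_neg) auto
  then have "eventually (\<lambda>x. (\<forall>k\<in>I. f k x \<le> c) \<and> x < t) (at_right s)"
    using \<open>s < t\<close> \<open>finite I\<close>
    by (intro eventually_conj eventually_ball_finite) (auto simp: eventually_at_right_field)
  then obtain b where b: "s < b" "\<And>y. s < y \<Longrightarrow> y < b \<Longrightarrow> (\<forall>k\<in>I. f k y \<le> c) \<and> y < t"
    unfolding eventually_at_right_field by blast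
  then have "(s + b) / 2 \<in> S" using b(2)[of "(s + b) / 2"] s(2) by (auto simp: S_def)
  then have "(s + b) / 2 \<le> s" unfolding s(1) using \<open>bdd_above S\<close> by (rule cSup_upper)
  with b(1) show False by simp
qed

lemma tendsto_0_of_dissipation:
  fixes V h g :: "real \<Rightarrow> real"
  assumes deriv: "\<And>t. 0 \<le> t \<Longrightarrow> (V has_real_derivative - h t) (at t within {0..})"
    and dominated: "\<And>t. 0 \<le> t \<Longrightarrow> (g t)\<^sup>2 \<le> h t"
    and bounded: "\<And>t. 0 \<le> t \<Longrightarrow> L \<le> V t"
    and lipschitz: "M-lipschitz_on {0..} g"
  shows "(g \<longlongrightarrow> 0) at_top"
proof (rule tendstoI)
  fix e :: real assume "0 < e"
  have mvt: "\<exists>x\<in>{a..b}. V b - V a = - h x * (b - a)" if "0 \<le> a" "a \<le> b" for a b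
  proof -
    have "(V has_derivative (\<lambda>y. - h x * y)) (at x within {a..b})" if "a \<le> x" "x \<le> b" for x
      using \<open>0 \<le> a\<close> that
      by (intro has_field_derivative_imp_has_derivative has_field_derivative_subset[OF deriv]) auto
    from mvt_very_simple[OF \<open>a \<le> b\<close> this] show ?thesis by simp
  qed
  have antitone: "V b \<le> V a" if ab: "0 \<le> a" "a \<le> b" for a b
  proof -
    obtain x where "x \<in> {a..b}" "V b - V a = - h x * (b - a)" using mvt[OF ab] by blast
    moreover have "0 \<le> h x"
      using dominated[of x] \<open>x \<in> {a..b}\<close> ab by (auto intro: order_trans[OF zero_le_power2])
    then have "0 \<le> h x * (b - a)" using ab by simp
    ultimately show ?thesis by simp
  qed
  have "0 \<le> M" using lipschitz by (rule lipschitz_on_nonneg)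
  define \<delta> where "\<delta> = e / (2 * (M + 1))"
  have "0 < \<delta>" "M * \<delta> \<le> e / 2"
    using \<open>0 \<le> M\<close> \<open>0 < e\<close> by (auto simp: \<delta>_def field_simps)
  define m where "m = Inf (V ` {0..})"
  have bdd: "bdd_below (V ` {0..})" using bounded by (auto intro: bdd_belowI[of _ L])
  have "Inf (V ` {0..}) < m + \<delta> * (e / 2)\<^sup>2" using \<open>0 < \<delta>\<close> \<open>0 < e\<close> by (simp add: m_def)
  from cInf_lessD[OF _ this] obtain T where T: "0 \<le> T" "V T < m + \<delta> * (e / 2)\<^sup>2"
    by auto
  have "dist (g t) 0 < e" if "T \<le> t" for t
  proof (rule ccontr)
    assume "\<not> ?thesis"
    then have large: "e \<le> \<bar>g t\<bar>" by simp
    have dissipation: "(e / 2)\<^sup>2 \<le> h x" if "t \<le> x" "x \<le> t + \<delta>" for x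
    proof -
      have "\<bar>g x - g t\<bar> \<le> M * (x - t)"
        using lipschitz_onD[OF lipschitz, of x t] that T \<open>T \<le> t\<close> by (simp add: dist_real_def)
      also have "\<dots> \<le> M * \<delta>" using \<open>0 \<le> M\<close> that by (intro mult_left_mono) auto
      finally have "e / 2 \<le> \<bar>g x\<bar>" using \<open>M * \<delta> \<le> e / 2\<close> large by linarith
      then have "(e / 2)\<^sup>2 \<le> \<bar>g x\<bar>\<^sup>2" using \<open>0 < e\<close> by (intro power_mono) auto
      also have "\<dots> \<le> h x" using dominated[of x] that T \<open>T \<le> t\<close> by simp
      finally show ?thesis .
    qed
    obtain x where "x \<in> {t..t + \<delta>}" "V (t + \<delta>) - V t = - h x * \<delta>"
      using mvt[of t "t + \<delta>"] T \<open>T \<le> t\<close> \<open>0 < \<delta>\<close> by auto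
    moreover from this have "(e / 2)\<^sup>2 * \<delta> \<le> h x * \<delta>"
      using dissipation \<open>0 < \<delta>\<close> by (intro mult_right_mono) auto
    moreover have "V t \<le> V T" using antitone T \<open>T \<le> t\<close> by auto
    moreover have "m \<le> V (t + \<delta>)"
      unfolding m_def using bdd T \<open>T \<le> t\<close> \<open>0 < \<delta>\<close> by (intro cInf_lower) auto
    ultimately show False using T by (simp add: algebra_simps)
  qed
  then show "eventually (\<lambda>t. dist (g t) 0 < e) at_top"
    unfolding eventually_at_top_linorder by blast
qed

locale kuramoto =
  fixes N :: nat and \<omega> :: "nat \<Rightarrow> real" and K :: real and \<theta> :: "real \<Rightarrow> nat \<Rightarrow> real"
  assumes N_pos: "0 < N"
    and kuramoto_ode: "\<And>i t. i < N \<Longrightarrow> 0 \<le> t \<Longrightarrow>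
      ((\<lambda>s. \<theta> s i) has_real_derivative \<omega> i + K / real N * (\<Sum>j<N. sin (\<theta> t j - \<theta> t i)))
        (at t within {0..})"
begin

definition freq :: "nat \<Rightarrow> real \<Rightarrow> real"
  where "freq i t = \<omega> i + K / real N * (\<Sum>j<N. sin (\<theta> t j - \<theta> t i))"

definition mean_freq :: real
  where "mean_freq = (\<Sum>i<N. \<omega> i) / real N"

definition lyapunov :: "real \<Rightarrow> real"
  where "lyapunov t = - (\<Sum>i<N. (\<omega> i - mean_freq) * \<theta> t i)
                      - K / (2 * real N) * (\<Sum>i<N. \<Sum>j<N. cos (\<theta> t j - \<theta> t i))"

lemma phase_has_derivative:
  "i < N \<Longrightarrow> 0 \<le> t \<Longrightarrow> ((\<lambda>s. \<theta> s i) has_real_derivative freq i t) (at t within {0..})"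
  unfolding freq_def by (rule kuramoto_ode)

lemma deriv_phase_eq_freq:
  assumes "i < N" "0 < t"
  shows "deriv (\<lambda>s. \<theta> s i) t = freq i t"
proof -
  have "((\<lambda>s. \<theta> s i) has_real_derivative freq i t) (at t within {0<..})"
    using assms by (intro has_field_derivative_subset[OF phase_has_derivative]) auto
  then have "((\<lambda>s. \<theta> s i) has_real_derivative freq i t) (at t)"
    using assms at_within_open[of t "{0<..}"] by simp
  then show ?thesis by (rule DERIV_imp_deriv)
qed

lemma phase_continuous: "i < N \<Longrightarrow> continuous_on {0..} (\<lambda>s. \<theta> s i)"
  by (rule DERIV_continuous_on[OF phase_has_derivative]) auto

lemma sin_phase_diff_antisym: "sin (\<theta> t i - \<theta> t j) = - sin (\<theta> t j - \<theta> t i)"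
  by (metis minus_diff_eq sin_minus)

lemma sum_freq: "(\<Sum>i<N. freq i t) = (\<Sum>i<N. \<omega> i)"
proof -
  have "(\<Sum>i<N. \<Sum>j<N. sin (\<theta> t j - \<theta> t i)) = 0"
    by (rule sum_sum_antisym_eq_0) (rule sin_phase_diff_antisym)
  then have "(\<Sum>i<N. K / real N * (\<Sum>j<N. sin (\<theta> t j - \<theta> t i))) = 0"
    by (simp only: sum_distrib_left[symmetric] mult_zero_right)
  then show ?thesis by (simp only: freq_def sum.distrib add_0_right)
qed

lemma sum_freq_deviation: "(\<Sum>i<N. freq i t - mean_freq) = 0"
  using N_pos by (simp add: sum_subtractf sum_freq mean_freq_def)

lemma lyapunov_deriv:
  assumes "0 \<le> t"
  shows "(lyapunov has_real_derivative - (\<Sum>i<N. (freq i t - mean_freq)\<^sup>2)) (at t within {0..})"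
proof -
  let ?s = "\<lambda>i j. sin (\<theta> t j - \<theta> t i)" and ?f = "\<lambda>i. freq i t"
  have cos_deriv: "((\<lambda>s. cos (\<theta> s j - \<theta> s i)) has_real_derivative - ?s i j * (?f j - ?f i))
      (at t within {0..})" if "i < N" "j < N" for i j
    using DERIV_chain2[OF DERIV_cos DERIV_diff[OF phase_has_derivative phase_has_derivative]]
      that assms by simp
  have "(lyapunov has_real_derivative - (\<Sum>i<N. (\<omega> i - mean_freq) * ?f i)
      - K / (2 * real N) * (\<Sum>i<N. \<Sum>j<N. - ?s i j * (?f j - ?f i))) (at t within {0..})"
    unfolding lyapunov_def[abs_def] using assms
    by (intro DERIV_diff DERIV_minus DERIV_cmult DERIV_sum phase_has_derivative cos_deriv) auto
  moreover have "(\<Sum>i<N. \<Sum>j<N. - ?s i j * (?f j - ?f i)) = 2 * (\<Sum>i<N. ?f i * (\<Sum>j<N. ?s i j))"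
    using sum_sum_antisym_mult_diff[of "{..<N}" ?s ?f, OF sin_phase_diff_antisym]
    by (simp add: sum_negf)
  moreover have "K / (2 * real N) * (2 * (\<Sum>i<N. ?f i * (\<Sum>j<N. ?s i j)))
      = (\<Sum>i<N. ?f i * (K / real N * (\<Sum>j<N. ?s i j)))"
    by (simp add: sum_distrib_left algebra_simps)
  moreover have "\<dots> = (\<Sum>i<N. ?f i * (?f i - \<omega> i))"
    by (intro sum.cong) (simp_all add: freq_def)
  moreover have "(\<Sum>i<N. (\<omega> i - mean_freq) * ?f i) + (\<Sum>i<N. ?f i * (?f i - \<omega> i))
      = (\<Sum>i<N. ?f i * (?f i - mean_freq))"
    unfolding sum.distrib[symmetric] by (intro sum.cong) (auto simp: algebra_simps)
  moreover note sum_power2_diff_eq[OF sum_freq_deviation, of t]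
  ultimately show ?thesis by (simp only: diff_conv_add_uminus minus_add_distrib[symmetric])
qed

definition speed_bound :: real
  where "speed_bound = (MAX k\<in>{..<N}. \<bar>\<omega> k\<bar>) + \<bar>K\<bar>"

lemma abs_freq_le: "i < N \<Longrightarrow> \<bar>freq i t\<bar> \<le> speed_bound"
proof -
  assume "i < N"
  have "\<bar>\<Sum>j<N. sin (\<theta> t j - \<theta> t i)\<bar> \<le> (\<Sum>j<N. \<bar>sin (\<theta> t j - \<theta> t i)\<bar>)" by (rule sum_abs)
  also have "\<dots> \<le> (\<Sum>j<N. 1)" by (intro sum_mono) simp
  finally have sum_le: "\<bar>\<Sum>j<N. sin (\<theta> t j - \<theta> t i)\<bar> \<le> real N" by simp
  have "\<bar>K / real N * (\<Sum>j<N. sin (\<theta> t j - \<theta> t i))\<bar> = \<bar>K\<bar> / real N * \<bar>\<Sum>j<N. sin (\<theta> t j - \<theta> t i)\<bar>"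
    by (simp add: abs_mult)
  also have "\<dots> \<le> \<bar>K\<bar> / real N * real N" using sum_le by (intro mult_left_mono) auto
  also have "\<dots> = \<bar>K\<bar>" using N_pos by simp
  finally have coupling_le: "\<bar>K / real N * (\<Sum>j<N. sin (\<theta> t j - \<theta> t i))\<bar> \<le> \<bar>K\<bar>" .
  have "\<bar>\<omega> i\<bar> \<le> (MAX k\<in>{..<N}. \<bar>\<omega> k\<bar>)" using \<open>i < N\<close> by (intro Max_ge) auto
  moreover have "\<bar>freq i t\<bar> \<le> \<bar>\<omega> i\<bar> + \<bar>K / real N * (\<Sum>j<N. sin (\<theta> t j - \<theta> t i))\<bar>"
    unfolding freq_def by (rule abs_triangle_ineq)
  ultimately show ?thesis using coupling_le unfolding speed_bound_def by linarith
qed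

lemma phase_lipschitz: "i < N \<Longrightarrow> speed_bound-lipschitz_on {0..} (\<lambda>t. \<theta> t i)"
proof (rule lipschitz_onI)
  fix s t :: real assume "i < N" "s \<in> {0..}" "t \<in> {0..}"
  then show "dist (\<theta> s i) (\<theta> t i) \<le> speed_bound * dist s t"
    using field_differentiable_bound[of "{0..}" "\<lambda>s. \<theta> s i" "\<lambda>t. freq i t" speed_bound s t]
      phase_has_derivative abs_freq_le
    by (simp add: dist_real_def convex_real_interval)
next
  show "0 \<le> speed_bound" using abs_freq_le[OF N_pos] by (meson abs_ge_zero order_trans)
qed

lemma freq_lipschitz:
  assumes "i < N"
  shows "\<exists>M. M-lipschitz_on {0..} (freq i)"
proof -
  have "(1 * (speed_bound + speed_bound))-lipschitz_on {0..} (\<lambda>t. sin (\<theta> t j - \<theta> t i))"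
    if "j < N" for j
    using that assms
    by (intro lipschitz_on_compose2[OF _ lipschitz_on_sin] lipschitz_on_diff phase_lipschitz)
  then have "(\<Sum>j<N. 1 * (speed_bound + speed_bound))-lipschitz_on {0..}
      (\<lambda>t. \<Sum>j<N. sin (\<theta> t j - \<theta> t i))"
    by (intro lipschitz_on_sum) simp
  then have "(0 + \<bar>K / real N\<bar> * (\<Sum>j<N. 1 * (speed_bound + speed_bound)))-lipschitz_on {0..}
      (\<lambda>t. \<omega> i + K / real N * (\<Sum>j<N. sin (\<theta> t j - \<theta> t i)))"
    by (intro lipschitz_on_add lipschitz_on_constant lipschitz_on_cmult_real)
  then show ?thesis unfolding freq_def[abs_def] by blast
qed

end

locale kuramoto_cohesive = kuramoto +
  fixes \<gamma> :: real
  assumes arc_bounds: "0 < \<gamma>" "\<gamma> < pi"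
    and init_cohesive: "\<And>i j. i < N \<Longrightarrow> j < N \<Longrightarrow> \<theta> 0 i - \<theta> 0 j \<le> \<gamma>"
    and strong_coupling: "real N * (Max (\<omega> ` {..<N}) - Min (\<omega> ` {..<N})) < 2 * K * sin \<gamma>"
begin

lemma natural_freq_diff_le:
  assumes "i < N" "j < N"
  shows "\<omega> i - \<omega> j \<le> Max (\<omega> ` {..<N}) - Min (\<omega> ` {..<N})"
proof -
  have "\<omega> i \<le> Max (\<omega> ` {..<N})" "Min (\<omega> ` {..<N}) \<le> \<omega> j"
    using assms by (auto intro: Max_ge Min_le)
  then show ?thesis by linarith
qed

lemma K_pos: "0 < K"
proof -
  have "0 \<le> real N * (Max (\<omega> ` {..<N}) - Min (\<omega> ` {..<N}))"
    using natural_freq_diff_le[OF N_pos N_pos] by simp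
  then have "0 < K * sin \<gamma>" using strong_coupling by simp
  then show ?thesis using sin_gt_zero[OF arc_bounds] by (simp add: zero_less_mult_iff)
qed

lemma freq_gap_at_boundary:
  assumes cohesive: "\<forall>k<N. \<forall>l<N. \<theta> t k - \<theta> t l \<le> \<gamma>"
    and boundary: "\<theta> t i - \<theta> t j = \<gamma>" and ij: "i < N" "j < N"
  shows "freq i t < freq j t"
proof -
  define f where "f k = sin (\<theta> t k - \<theta> t i) - sin (\<theta> t k - \<theta> t j)" for k
  have freq_diff: "freq i t - freq j t = \<omega> i - \<omega> j + K / real N * (\<Sum>k<N. f k)"
    by (simp add: freq_def f_def sum_subtractf algebra_simps)
  have f_nonpos: "f k \<le> 0" if "k < N" for k
  proof -
    have "0 \<le> sin (\<theta> t i - \<theta> t k)"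
      using cohesive that ij boundary arc_bounds by (intro sin_ge_zero) force+
    moreover have "0 \<le> sin (\<theta> t k - \<theta> t j)"
      using cohesive that ij boundary arc_bounds by (intro sin_ge_zero) force+
    ultimately show ?thesis unfolding f_def by (simp add: sin_phase_diff_antisym[of t i k])
  qed
  have "i \<noteq> j" using boundary arc_bounds by auto
  have "(\<Sum>k<N. f k) = f i + f j + (\<Sum>k\<in>{..<N} - {i, j}. f k)"
    using ij \<open>i \<noteq> j\<close> by (subst sum.subset_diff[of "{i, j}"]) auto
  also have "\<dots> \<le> f i + f j"
    using sum_nonpos[of "{..<N} - {i, j}" f] f_nonpos by auto
  also have "\<dots> = - 2 * sin \<gamma>"
    using boundary by (simp add: f_def sin_phase_diff_antisym[of t j i])
  finally have "K / real N * (\<Sum>k<N. f k) \<le> K / real N * (- 2 * sin \<gamma>)"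
    using K_pos by (intro mult_left_mono) auto
  moreover have "Max (\<omega> ` {..<N}) - Min (\<omega> ` {..<N}) < K / real N * (2 * sin \<gamma>)"
    using strong_coupling N_pos by (simp add: field_simps)
  ultimately show ?thesis using freq_diff natural_freq_diff_le[OF ij] by linarith
qed

lemma phase_cohesive:
  assumes "0 \<le> t" "i < N" "j < N"
  shows "\<theta> t i - \<theta> t j \<le> \<gamma>"
proof -
  let ?I = "{..<N} \<times> {..<N}" and ?f = "\<lambda>p t. \<theta> t (fst p) - \<theta> t (snd p)"
  have "\<forall>p\<in>?I. ?f p t \<le> \<gamma>"
  proof (rule sublevel_forward_invariant[where f = ?f])
    show "continuous_on {0..} (?f p)" if "p \<in> ?I" for p
      using that by (auto intro!: continuous_on_diff phase_continuous)
    show "?f p 0 \<le> \<gamma>" if "p \<in> ?I" for p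
      using that init_cohesive by auto
    show "\<exists>d<0. (?f p has_real_derivative d) (at s within {0..})"
      if "p \<in> ?I" "0 \<le> s" "\<forall>q\<in>?I. ?f q s \<le> \<gamma>" "?f p s = \<gamma>" for p s
    proof -
      obtain i j where p: "p = (i, j)" "i < N" "j < N" using \<open>p \<in> ?I\<close> by auto
      have "freq i s < freq j s" using that p by (intro freq_gap_at_boundary) auto
      moreover have "(?f p has_real_derivative freq i s - freq j s) (at s within {0..})"
        using p \<open>0 \<le> s\<close> by (auto intro: DERIV_diff phase_has_derivative)
      ultimately show ?thesis by (intro exI[of _ "freq i s - freq j s"]) auto
    qed
  qed (use \<open>0 \<le> t\<close> in simp_all)
  then show ?thesis using assms by auto
qed

lemma lyapunov_bounded_below: "\<exists>L. \<forall>t\<ge>0. L \<le> lyapunov t"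
proof (intro exI allI impI)
  fix t :: real assume "0 \<le> t"
  have "(\<Sum>i<N. (\<omega> i - mean_freq) * \<theta> t 0) = 0"
    using N_pos by (simp add: sum_distrib_right[symmetric] sum_subtractf mean_freq_def)
  then have "(\<Sum>i<N. (\<omega> i - mean_freq) * \<theta> t i) = (\<Sum>i<N. (\<omega> i - mean_freq) * (\<theta> t i - \<theta> t 0))"
    by (simp add: right_diff_distrib sum_subtractf)
  also have "\<dots> \<le> (\<Sum>i<N. \<bar>\<omega> i - mean_freq\<bar> * \<gamma>)"
  proof (intro sum_mono)
    fix i assume "i \<in> {..<N}"
    then have "\<bar>\<theta> t i - \<theta> t 0\<bar> \<le> \<gamma>"
      using phase_cohesive[OF \<open>0 \<le> t\<close>] N_pos by (auto simp: abs_le_iff)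
    then have "\<bar>\<omega> i - mean_freq\<bar> * \<bar>\<theta> t i - \<theta> t 0\<bar> \<le> \<bar>\<omega> i - mean_freq\<bar> * \<gamma>"
      by (intro mult_left_mono) auto
    then show "(\<omega> i - mean_freq) * (\<theta> t i - \<theta> t 0) \<le> \<bar>\<omega> i - mean_freq\<bar> * \<gamma>"
      by (metis abs_ge_self abs_mult order_trans)
  qed
  finally have drift: "(\<Sum>i<N. (\<omega> i - mean_freq) * \<theta> t i) \<le> (\<Sum>i<N. \<bar>\<omega> i - mean_freq\<bar> * \<gamma>)" .
  have "(\<Sum>i<N. \<Sum>j<N. cos (\<theta> t j - \<theta> t i)) \<le> (\<Sum>i<N. \<Sum>j<N. 1)"
    by (intro sum_mono) simp
  then have "K / (2 * real N) * (\<Sum>i<N. \<Sum>j<N. cos (\<theta> t j - \<theta> t i))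
      \<le> K / (2 * real N) * (real N * real N)"
    using K_pos by (intro mult_left_mono) auto
  with drift show "- (\<Sum>i<N. \<bar>\<omega> i - mean_freq\<bar> * \<gamma>) - K / (2 * real N) * (real N * real N)
      \<le> lyapunov t"
    unfolding lyapunov_def by linarith
qed

lemma freq_tendsto_mean:
  assumes "i < N"
  shows "(freq i \<longlongrightarrow> mean_freq) at_top"
proof -
  obtain L where "\<forall>t\<ge>0. L \<le> lyapunov t" using lyapunov_bounded_below by blast
  moreover obtain M where "M-lipschitz_on {0..} (freq i)" using freq_lipschitz[OF assms] by blast
  then have "(M + 0)-lipschitz_on {0..} (\<lambda>t. freq i t - mean_freq)"
    by (intro lipschitz_on_diff lipschitz_on_constant)
  moreover have "(freq i t - mean_freq)\<^sup>2 \<le> (\<Sum>k<N. (freq k t - mean_freq)\<^sup>2)" for t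
    using assms by (intro member_le_sum) auto
  ultimately have "((\<lambda>t. freq i t - mean_freq) \<longlongrightarrow> 0) at_top"
    by (intro tendsto_0_of_dissipation[OF lyapunov_deriv]) auto
  then show ?thesis by (simp add: LIM_zero_iff)
qed

theorem frequency_synchronization:
  assumes "i < N" "j < N"
  shows "((\<lambda>t. deriv (\<lambda>s. \<theta> s i) t - deriv (\<lambda>s. \<theta> s j) t) \<longlongrightarrow> 0) at_top"
proof -
  have "((\<lambda>t. freq i t - freq j t) \<longlongrightarrow> mean_freq - mean_freq) at_top"
    using assms by (intro tendsto_diff freq_tendsto_mean)
  moreover have "eventually (\<lambda>t. freq i t - freq j t
      = deriv (\<lambda>s. \<theta> s i) t - deriv (\<lambda>s. \<theta> s j) t) at_top"
    using eventually_gt_at_top[of 0]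
    by eventually_elim (use assms in \<open>simp add: deriv_phase_eq_freq\<close>)
  ultimately show ?thesis by (simp add: tendsto_cong)
qed

end

theorem mainTheorem10:
  fixes N :: nat and \<omega> :: "nat \<Rightarrow> real" and K \<epsilon> :: real
    and \<theta> :: "real \<Rightarrow> nat \<Rightarrow> real"
  assumes eps: "0 < \<epsilon>" "\<epsilon> < pi / 4"
    and ode: "\<forall>i<N. \<forall>t\<ge>0. ((\<lambda>s. \<theta> s i) has_real_derivative
               (\<omega> i + K / real N * (\<Sum>j<N. sin (\<theta> t j - \<theta> t i)))) (at t within {0..})"
    and init: "\<forall>i<N. \<forall>j<N. \<bar>\<theta> 0 i - \<theta> 0 j\<bar> \<le> pi / 2 - 2 * \<epsilon>"
    and K: "K > real N * (Max (\<omega> ` {..<N}) - Min (\<omega> ` {..<N})) / (2 * cos (2 * \<epsilon>))"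
  shows "\<forall>i<N. \<forall>j<N.
           ((\<lambda>t. deriv (\<lambda>s. \<theta> s i) t - deriv (\<lambda>s. \<theta> s j) t) \<longlongrightarrow> 0) at_top"
proof (cases "N = 0")
  case False
  have "sin (pi / 2 - 2 * \<epsilon>) = cos (2 * \<epsilon>)" by (simp add: sin_diff)
  moreover have "0 < cos (2 * \<epsilon>)" using eps by (intro cos_gt_zero_pi) auto
  ultimately interpret kuramoto_cohesive N \<omega> K \<theta> "pi / 2 - 2 * \<epsilon>"
    using False eps ode init K by unfold_locales (auto simp: abs_le_iff pos_divide_less_eq)
  show ?thesis using frequency_synchronization by blast
qed simp

end
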